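(* Let $\Pi$ be a nonempty set and $\mathcal{P}:\Pi\times\Pi\to[-1,1]$ anti-symmetric ($\mathcal{P}(\pi,\pi')=-\mathcal{P}(\pi',\pi)$ for all $\pi,\pi'$); for $p,q\in\Delta(\Pi)$ let $\mathcal{P}(p,q)=\mathbb{E}_{\pi\sim p,\pi'\sim q}[\mathcal{P}(\pi,\pi')]$. Let $\mathcal{O}$ be a no-regret online linear optimization algorithm over $\Delta(\Pi)$, i.e. it produces iterates $p_{t+1}=\mathcal{O}(\ell_{1:t})\in\Delta(\Pi)$ such that for every sequence of $T$ loss functions of the form $\ell_t(p)=\mathbb{E}_{\pi\sim p}[f_t(\pi)]$ with $f_t:\Pi\to[-1,1]$, $$\sum_{t=1}^T\ell_t(p_t)-\min_{p^\star\in\Delta(\Pi)}\sum_{t=1}^T\ell_t(p^\star)\le\mathsf{Reg}(T),\qquad \lim_{T\to\infty}\frac{\mathsf{Reg}(T)}{T}=0.$$ Run a single copy of $\mathcal{O}$: initialize $p_1\in\Delta(\Pi)$ and set $p_{t+1}=\mathcal{O}(\ell^{\mathrm{SPO}}_{1:t})$, where $\ell_t^{\mathrm{SPO}}(p)=\mathbb{E}_{\pi\sim p,\pi'\sim p_t}[-\mathcal{P}(\pi,\pi')]$. Then $\bar p=(p_1+\dots+p_T)/T$ is a $\frac{2\mathsf{Reg}(T)}{T}$-approximate Minimax Winner, i.e. $$\max_{p^\star\in\Delta(\Pi)}\mathcal{P}(p^\star,\bar p)-\min_{q^\star\in\Delta(\Pi)}\mathcal{P}(\bar p,q^\star)\l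e\frac{2\mathsf{Reg}(T)}{T}.$$
   Context: $\Delta(\Pi)$ is the set of probability distributions over $\Pi$. A pair $(p,q)\in\Delta(\Pi)^2$ is an $\epsilon$-approximate Minimax Winner (Nash equilibrium of the zero-sum game with payoff $\mathcal{P}$) if $\max_{p^\star}\mathcal{P}(p^\star,q)-\min_{q^\star}\mathcal{P}(p,q^\star)\le\epsilon$; the claim is that $(\bar p,\bar p)$ is such a pair. Full feedback is assumed: at round $t$ the algorithm observes the entire loss function $\ell_t^{\mathrm{SPO}}$. *)

theory Defs
  imports "HOL-Probability.Probability"
begin

definition pref_mix :: "('a \<Rightarrow> 'a \<Rightarrow> real) \<Rightarrow> 'a pmf \<Rightarrow> 'a pmf \<Rightarrow> real" where
  "pref_mix P p q = measure_pmf.expectation p (\<lambda>x. measure_pmf.expectation q (\<lambda>y. P x y))"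

definition lin_loss :: "'a pmf \<Rightarrow> ('a \<Rightarrow> real) \<Rightarrow> real" where
  "lin_loss p f = measure_pmf.expectation p f"

text \<open>An online linear optimization algorithm is a map from the (full-feedback) history
  of loss functions l_1..l_t (each given by its f_t) to the next iterate p_{t+1};
  p_1 = Alg [].\<close>
definition regret_bound :: "(('a \<Rightarrow> real) list \<Rightarrow> 'a pmf) \<Rightarrow> (nat \<Rightarrow> real) \<Rightarrow> bool" where
  "regret_bound Alg Reg \<longleftrightarrow>
     (\<forall>fs. (\<forall>t<length fs. \<forall>x. \<bar>(fs ! t) x\<bar> \<le> 1) \<longrightarrow>
        (\<Sum>t<length fs. lin_loss (Alg (take t fs)) (fs ! t))
          - (INF p. \<Sum>t<length fs. lin_loss p (fs ! t)) \<le> Reg (length fs))"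

definition no_regret :: "(('a \<Rightarrow> real) list \<Rightarrow> 'a pmf) \<Rightarrow> (nat \<Rightarrow> real) \<Rightarrow> bool" where
  "no_regret Alg Reg \<longleftrightarrow> regret_bound Alg Reg \<and> (\<lambda>T. Reg T / real T) \<longlonglongrightarrow> 0"

primrec spo_hist :: "(('a \<Rightarrow> real) list \<Rightarrow> 'a pmf) \<Rightarrow> ('a \<Rightarrow> 'a \<Rightarrow> real) \<Rightarrow> nat \<Rightarrow> ('a \<Rightarrow> real) list" where
  "spo_hist Alg P 0 = []"
| "spo_hist Alg P (Suc t) = spo_hist Alg P t @
     [(\<lambda>x. - measure_pmf.expectation (Alg (spo_hist Alg P t)) (\<lambda>y. P x y))]"

text \<open>Iterate p_{t+1} (0-indexed: spo_iter Alg P t is p_{t+1}).\<close>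
definition spo_iter :: "(('a \<Rightarrow> real) list \<Rightarrow> 'a pmf) \<Rightarrow> ('a \<Rightarrow> 'a \<Rightarrow> real) \<Rightarrow> nat \<Rightarrow> 'a pmf" where
  "spo_iter Alg P t = Alg (spo_hist Alg P t)"

definition avg_iter :: "(('a \<Rightarrow> real) list \<Rightarrow> 'a pmf) \<Rightarrow> ('a \<Rightarrow> 'a \<Rightarrow> real) \<Rightarrow> nat \<Rightarrow> 'a pmf" where
  "avg_iter Alg P T = bind_pmf (pmf_of_set {..<T}) (\<lambda>t. spo_iter Alg P t)"

end

theory Submission
  imports Defs
begin

text \<open>Along the self-play run the learner suffers zero loss in every round, because
  antisymmetry forces \<open>P(p, p) = 0\<close>. Against a fixed comparator \<open>p\<close>, bilinearity and
  antisymmetry turn the cumulative loss into \<open>-T \<cdot> P(p, p\<^sub>a\<^sub>v\<^sub>g)\<close>. Hence the regret bound says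
  that no \<open>p\<close> beats the average iterate by more than \<open>Reg(T)/T\<close>, and by antisymmetry
  the average iterate loses to no \<open>q\<close> by more than \<open>Reg(T)/T\<close> either.\<close>

lemma abs_expectation_le:
  fixes h :: "'a \<Rightarrow> real"
  assumes "\<And>x. \<bar>h x\<bar> \<le> B"
  shows "\<bar>measure_pmf.expectation p h\<bar> \<le> B"
proof -
  have "integrable (measure_pmf p) h"
    by (rule measure_pmf.integrable_const_bound[where B = B]) (use assms in auto)
  then have "\<bar>measure_pmf.expectation p h\<bar> \<le> measure_pmf.expectation p (\<lambda>x. \<bar>h x\<bar>)"
    using integral_norm_bound[of p h] by simp
  also have "\<dots> \<le> measure_pmf.expectation p (\<lambda>_. B)"
    by (rule integral_mono) (use \<open>integrable (measure_pmf p) h\<close> assms in auto)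
  finally show ?thesis
    by simp
qed

lemma expectation_bind_pmf:
  fixes h :: "'b \<Rightarrow> real"
  assumes "\<And>x. \<bar>h x\<bar> \<le> B"
  shows "measure_pmf.expectation (bind_pmf p f) h
       = measure_pmf.expectation p (\<lambda>x. measure_pmf.expectation (f x) h)"
proof -
  have "(\<lambda>x. measure_pmf (f x)) \<in> measurable (measure_pmf p) (subprob_algebra (count_space UNIV))"
    using measurable_measure_pmf[of f] by (simp add: measurable_cong_sets)
  then show ?thesis
    unfolding measure_pmf_bind
    by (rule integral_bind[where B = B and B' = 1, rotated 2])
       (auto simp: assms measure_pmf.finite_measure_axioms)
qed

lemma expectation_swap_pmf:
  fixes g :: "'a \<Rightarrow> 'b \<Rightarrow> real"
  assumes "\<And>x y. \<bar>g x y\<bar> \<le> B"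
  shows "measure_pmf.expectation p (\<lambda>x. measure_pmf.expectation q (g x))
       = measure_pmf.expectation q (\<lambda>y. measure_pmf.expectation p (\<lambda>x. g x y))"
proof -
  have bounded: "\<bar>case_prod g z\<bar> \<le> B" for z
    using assms by (simp split: prod.splits)
  have "measure_pmf.expectation p (\<lambda>x. measure_pmf.expectation q (g x))
      = measure_pmf.expectation (bind_pmf p (\<lambda>x. bind_pmf q (\<lambda>y. return_pmf (x, y)))) (case_prod g)"
    by (simp add: expectation_bind_pmf[OF bounded])
  also have "\<dots> = measure_pmf.expectation (bind_pmf q (\<lambda>y. bind_pmf p (\<lambda>x. return_pmf (x, y)))) (case_prod g)"
    by (subst bind_commute_pmf) (rule refl)
  also have "\<dots> = measure_pmf.expectation q (\<lambda>y. measure_pmf.expectation p (\<lambda>x. g x y))"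
    by (simp add: expectation_bind_pmf[OF bounded])
  finally show ?thesis .
qed

lemma pref_mix_antisym:
  assumes bounded: "\<And>x y. \<bar>P x y\<bar> \<le> 1" and antisym: "\<And>x y. P x y = - P y x"
  shows "pref_mix P p q = - pref_mix P q p"
proof -
  have "pref_mix P p q = measure_pmf.expectation q (\<lambda>y. measure_pmf.expectation p (\<lambda>x. P x y))"
    unfolding pref_mix_def by (rule expectation_swap_pmf[OF bounded])
  also have "\<dots> = measure_pmf.expectation q (\<lambda>y. - measure_pmf.expectation p (P y))"
    by (subst antisym) simp
  also have "\<dots> = - pref_mix P q p"
    unfolding pref_mix_def by simp
  finally show ?thesis .
qed

lemma pref_mix_self:
  assumes "\<And>x y. \<bar>P x y\<bar> \<le> 1" and "\<And>x y. P x y = - P y x"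
  shows "pref_mix P p p = 0"
  using pref_mix_antisym[of P p p, OF assms] by linarith

lemma pref_mix_bind_pmf_left:
  assumes "\<And>x y. \<bar>P x y\<bar> \<le> 1"
  shows "pref_mix P (bind_pmf M f) q = measure_pmf.expectation M (\<lambda>a. pref_mix P (f a) q)"
  unfolding pref_mix_def by (intro expectation_bind_pmf[where B = 1] abs_expectation_le assms)

lemma regret_boundD:
  assumes "regret_bound Alg Reg"
    and bounded: "\<forall>t<length fs. \<forall>x. \<bar>(fs ! t) x\<bar> \<le> 1"
  shows "(\<Sum>t<length fs. lin_loss (Alg (take t fs)) (fs ! t))
           - (\<Sum>t<length fs. lin_loss p (fs ! t)) \<le> Reg (length fs)"
proof -
  have "- real (length fs) \<le> (\<Sum>t<length fs. lin_loss q (fs ! t))" for q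
  proof -
    have "- 1 \<le> lin_loss q (fs ! t)" if "t < length fs" for t
      using abs_expectation_le[of "fs ! t" 1 q] bounded that
      unfolding lin_loss_def by (simp add: abs_le_iff)
    then show ?thesis
      using sum_bounded_below[of "{..<length fs}" "- 1" "\<lambda>t. lin_loss q (fs ! t)"] by simp
  qed
  then have "(INF q. \<Sum>t<length fs. lin_loss q (fs ! t)) \<le> (\<Sum>t<length fs. lin_loss p (fs ! t))"
    by (intro cINF_lower bdd_belowI2) auto
  then show ?thesis
    using assms unfolding regret_bound_def by fastforce
qed

lemma length_spo_hist [simp]: "length (spo_hist Alg P T) = T"
  by (induction T) auto

lemma nth_spo_hist:
  "t < T \<Longrightarrow> spo_hist Alg P T ! t = (\<lambda>x. - measure_pmf.expectation (spo_iter Alg P t) (P x))"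
  by (induction T) (auto simp: nth_append spo_iter_def less_Suc_eq)

lemma take_spo_hist: "t \<le> T \<Longrightarrow> take t (spo_hist Alg P T) = spo_hist Alg P t"
  by (induction T) (auto simp: le_Suc_eq)

lemma lin_loss_spo_hist:
  "t < T \<Longrightarrow> lin_loss p (spo_hist Alg P T ! t) = - pref_mix P p (spo_iter Alg P t)"
  by (simp add: nth_spo_hist lin_loss_def pref_mix_def)

lemma pref_mix_avg_iter_right:
  assumes "\<And>x y. \<bar>P x y\<bar> \<le> 1" and "\<And>x y. P x y = - P y x" and "T > 0"
  shows "pref_mix P p (avg_iter Alg P T) = (\<Sum>t<T. pref_mix P p (spo_iter Alg P t)) / real T"
proof -
  have "pref_mix P (avg_iter Alg P T) p = (\<Sum>t<T. pref_mix P (spo_iter Alg P t) p) / real T"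
    unfolding avg_iter_def pref_mix_bind_pmf_left[OF assms(1)]
    using \<open>T > 0\<close> by (subst integral_pmf_of_set) auto
  then show ?thesis
    by (simp add: pref_mix_antisym[OF assms(1,2), where q = p] sum_negf)
qed

lemma spo_avg_iter_best_response_le:
  assumes bounded: "\<And>x y. \<bar>P x y\<bar> \<le> 1" and antisym: "\<And>x y. P x y = - P y x"
    and "regret_bound Alg Reg" and "T > 0"
  shows "pref_mix P p (avg_iter Alg P T) \<le> Reg T / real T"
proof -
  let ?fs = "spo_hist Alg P T"
  have "\<forall>t<length ?fs. \<forall>x. \<bar>(?fs ! t) x\<bar> \<le> 1"
    by (simp add: nth_spo_hist abs_expectation_le bounded)
  then have "(\<Sum>t<T. lin_loss (Alg (take t ?fs)) (?fs ! t)) - (\<Sum>t<T. lin_loss p (?fs ! t)) \<le> Reg T"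
    using regret_boundD[OF \<open>regret_bound Alg Reg\<close>] by fastforce
  moreover have "lin_loss (Alg (take t ?fs)) (?fs ! t) = 0" if "t < T" for t
    using that by (simp add: take_spo_hist lin_loss_spo_hist flip: spo_iter_def)
      (rule pref_mix_self[OF bounded antisym])
  moreover have "(\<Sum>t<T. lin_loss p (?fs ! t)) = - real T * pref_mix P p (avg_iter Alg P T)"
    using \<open>T > 0\<close> by (simp add: lin_loss_spo_hist pref_mix_avg_iter_right[OF bounded antisym] sum_negf)
  ultimately show ?thesis
    using \<open>T > 0\<close> by (simp add: field_simps)
qed

lemma duality_gap_le_of_best_response:
  assumes "\<And>x y. \<bar>P x y\<bar> \<le> 1" and "\<And>x y. P x y = - P y x"
    and best_response: "\<And>p. pref_mix P p q \<le> \<epsilon>"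
  shows "(SUP p. pref_mix P p q) - (INF r. pref_mix P q r) \<le> 2 * \<epsilon>"
proof -
  have "(SUP p. pref_mix P p q) \<le> \<epsilon>"
    by (rule cSUP_least) (auto intro: best_response)
  moreover have "- \<epsilon> \<le> (INF r. pref_mix P q r)"
    by (rule cINF_greatest) (auto simp: pref_mix_antisym[OF assms(1,2), where p = q] best_response)
  ultimately show ?thesis
    by simp
qed

theorem theorem1:
  fixes P :: "'a \<Rightarrow> 'a \<Rightarrow> real"
    and Alg :: "('a \<Rightarrow> real) list \<Rightarrow> 'a pmf"
    and Reg :: "nat \<Rightarrow> real"
    and T :: nat
  assumes bounded: "\<And>x y. \<bar>P x y\<bar> \<le> 1"
    and antisym: "\<And>x y. P x y = - P y x"
    and alg: "no_regret Alg Reg"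
    and T_pos: "T > 0"
  shows "(SUP p. pref_mix P p (avg_iter Alg P T)) - (INF q. pref_mix P (avg_iter Alg P T) q)
           \<le> 2 * Reg T / real T"
proof -
  have "regret_bound Alg Reg"
    using alg by (simp add: no_regret_def)
  then have "pref_mix P p (avg_iter Alg P T) \<le> Reg T / real T" for p
    by (rule spo_avg_iter_best_response_le[OF bounded antisym _ T_pos])
  then show ?thesis
    using duality_gap_le_of_best_response[OF bounded antisym] by fastforce
qed

end
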